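(* For any networked common goods game in which the utility function $U_j$ of every agent $a_j$ is increasing, concave and differentiable, a pure strategy Nash equilibrium exists.
   Context: A networked common goods game (NCGG) is given by a finite bipartite graph $G=(P,A,E)$ with goods $P=\{p_1,\dots,p_n\}$ and agents $A=\{a_1,\dots,a_m\}$ (an edge $(p_i,a_j)\in E$ means agent $a_j$ is entitled to good $p_i$), ground levels $\alpha_i\ge 0$ for each good $p_i$, and for each agent $a_j$ a utility function $U_j:[0,\infty)\to\mathbb{R}$ with $U_j(0)=0$. $N(v)$ denotes the set of neighbours of a vertex $v$. Each agent owns one unit of a divisible resource; a strategy of $a_j$ is a vector $(x_{ij})_{p_i\in N(a_j)}$ with $x_{ij}\ge 0$ and $\sum_{p_i\in N(a_j)}x_{ij}\le 1$. For a strategy profile, the total resource of good $p_i$ is $W_i=\alpha_i+\sum_{a_k\in N(p_i)}x_{ik}$, and the payoff of $a_j$ is $\sum_{p_i\in N(a_j)}U_j(W_i)$. A pure strategy Nash equilibrium is a profile in which no agent can strictly increase her payoff by unilaterally changing her strategy. *)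

theory Defs
  imports "HOL-Analysis.Analysis"
begin

text \<open>A networked common goods game: goods of type 'p, agents of type 'a,
  the bipartite graph is given by finite sets P, A and an edge set E \<subseteq> P \<times> A.
  A strategy profile is x :: 'p \<Rightarrow> 'a \<Rightarrow> real, where x i j is the amount agent j
  invests in good i (only values on edges matter).\<close>

definition ncgg :: "'p set \<Rightarrow> 'a set \<Rightarrow> ('p \<times> 'a) set \<Rightarrow> ('p \<Rightarrow> real) \<Rightarrow> ('a \<Rightarrow> real \<Rightarrow> real) \<Rightarrow> bool" where
  "ncgg P A E \<alpha> U \<longleftrightarrow> finite P \<and> finite A \<and> E \<subseteq> P \<times> A
     \<and> (\<forall>i\<in>P. \<alpha> i \<ge> 0) \<and> (\<forall>j\<in>A. U j 0 = 0)"

definition goods_of :: "('p \<times> 'a) set \<Rightarrow> 'a \<Rightarrow> 'p set" where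
  "goods_of E j = {i. (i, j) \<in> E}"

definition agents_of :: "('p \<times> 'a) set \<Rightarrow> 'p \<Rightarrow> 'a set" where
  "agents_of E i = {j. (i, j) \<in> E}"

definition is_strategy :: "('p \<times> 'a) set \<Rightarrow> 'a \<Rightarrow> ('p \<Rightarrow> real) \<Rightarrow> bool" where
  "is_strategy E j s \<longleftrightarrow> (\<forall>i\<in>goods_of E j. s i \<ge> 0) \<and> (\<Sum>i\<in>goods_of E j. s i) \<le> 1"

definition is_profile :: "'a set \<Rightarrow> ('p \<times> 'a) set \<Rightarrow> ('p \<Rightarrow> 'a \<Rightarrow> real) \<Rightarrow> bool" where
  "is_profile A E x \<longleftrightarrow> (\<forall>j\<in>A. is_strategy E j (\<lambda>i. x i j))"

definition total_resource :: "('p \<times> 'a) set \<Rightarrow> ('p \<Rightarrow> real) \<Rightarrow> ('p \<Rightarrow> 'a \<Rightarrow> real) \<Rightarrow> 'p \<Rightarrow> real" where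
  "total_resource E \<alpha> x i = \<alpha> i + (\<Sum>k\<in>agents_of E i. x i k)"

definition payoff :: "('p \<times> 'a) set \<Rightarrow> ('p \<Rightarrow> real) \<Rightarrow> ('a \<Rightarrow> real \<Rightarrow> real) \<Rightarrow> ('p \<Rightarrow> 'a \<Rightarrow> real) \<Rightarrow> 'a \<Rightarrow> real" where
  "payoff E \<alpha> U x j = (\<Sum>i\<in>goods_of E j. U j (total_resource E \<alpha> x i))"

definition deviate :: "('p \<Rightarrow> 'a \<Rightarrow> real) \<Rightarrow> 'a \<Rightarrow> ('p \<Rightarrow> real) \<Rightarrow> ('p \<Rightarrow> 'a \<Rightarrow> real)" where
  "deviate x j s = (\<lambda>i k. if k = j then s i else x i k)"

definition pure_nash :: "'a set \<Rightarrow> ('p \<times> 'a) set \<Rightarrow> ('p \<Rightarrow> real) \<Rightarrow> ('a \<Rightarrow> real \<Rightarrow> real) \<Rightarrow> ('p \<Rightarrow> 'a \<Rightarrow> real) \<Rightarrow> bool" where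
  "pure_nash A E \<alpha> U x \<longleftrightarrow> is_profile A E x \<and>
     (\<forall>j\<in>A. \<forall>s. is_strategy E j s \<longrightarrow> \<not> (payoff E \<alpha> U (deviate x j s) j > payoff E \<alpha> U x j))"

end

theory Submission
  imports Defs
begin

text \<open>A profile in which every agent spends her whole unit, and only on goods whose total
  resource is minimal among her goods, is an equilibrium: by concavity, the chord slope of
  moving resource onto any of her goods never exceeds the chord slope of withdrawing it from a
  minimal one, and monotonicity makes keeping resource back useless. Such a profile exists:
  take a minimiser of the potential \<open>\<Sum>\<^sub>p W\<^sub>p\<^sup>2\<close> over the compact set of full
  profiles, since moving a little resource from a good to a strictly poorer one decreases the
  potential.\<close>

lemma concave_on_slope_antimono:
  fixes f :: "real \<Rightarrow> real"
  assumes f: "concave_on I f" and I: "a \<in> I" "b \<in> I" "c \<in> I" "d \<in> I"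
    and "a < b" "b \<le> c" "c < d"
  shows "(f d - f c) / (d - c) \<le> (f b - f a) / (b - a)"
proof -
  have g: "convex_on I (\<lambda>x. - f x)"
    using f by (simp add: concave_on_def)
  have slope_g: "(- f x - - f y) / (x - y) = - ((f y - f x) / (y - x))" for x y
    by (cases "x = y") (simp_all add: field_simps)
  have ab_bd: "(f d - f b) / (d - b) \<le> (f b - f a) / (b - a)"
    using convex_on_slope_le[OF g I(1) I(4), of b] assms slope_g[of a b] slope_g[of a d] slope_g[of b d]
    by linarith
  show ?thesis
  proof (cases "b = c")
    case False
    then have "(f d - f c) / (d - c) \<le> (f d - f b) / (d - b)"
      using convex_on_slope_le(2)[OF g I(2) I(4), of c] assms slope_g[of b d] slope_g[of c d]
      by linarith
    with ab_bd show ?thesis by linarith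
  qed (use ab_bd in simp)
qed

lemma sum_concave_shift_le:
  fixes u :: "real \<Rightarrow> real" and W d :: "'i \<Rightarrow> real"
  assumes concave: "concave_on I u" and mono: "mono_on I u" and "finite G"
    and W: "\<And>i. i \<in> G \<Longrightarrow> W i \<in> I" and Wd: "\<And>i. i \<in> G \<Longrightarrow> W i + d i \<in> I"
    and outflow_from_minima: "\<And>i k. i \<in> G \<Longrightarrow> k \<in> G \<Longrightarrow> d k < 0 \<Longrightarrow> W k \<le> W i"
    and "sum d G \<le> 0"
  shows "(\<Sum>i\<in>G. u (W i + d i)) \<le> (\<Sum>i\<in>G. u (W i))"
proof -
  define slope where "slope i = (u (W i + d i) - u (W i)) / d i" for i
  \<comment> \<open>\<open>\<sigma>\<close> separates the chord slopes of goods gaining resource from those of goods losing it,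
    so every change is at most \<open>\<sigma> * d i\<close>\<close>
  define \<sigma> where "\<sigma> = Max (insert 0 (slope ` {i\<in>G. 0 < d i}))"
  have fin: "finite (insert 0 (slope ` {i\<in>G. 0 < d i}))"
    using \<open>finite G\<close> by simp
  have \<sigma>_nonneg: "0 \<le> \<sigma>"
    unfolding \<sigma>_def using fin by simp
  have slope_le_\<sigma>: "slope i \<le> \<sigma>" if "i \<in> G" "0 < d i" for i
    unfolding \<sigma>_def using fin that by simp
  have \<sigma>_le_slope: "\<sigma> \<le> slope k" if k: "k \<in> G" "d k < 0" for k
  proof -
    have "u (W k + d k) \<le> u (W k)"
      using mono_onD[OF mono Wd W] k by simp
    then have "0 \<le> slope k"
      using k by (simp add: slope_def divide_nonpos_neg)
    moreover have "slope i \<le> slope k" if "i \<in> G" "0 < d i" for i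
      \<comment> \<open>the chord leaving the minimal level W k is steeper than any chord above it\<close>
      using concave_on_slope_antimono[OF concave Wd[OF k(1)] W[OF k(1)] W[OF that(1)] Wd[OF that(1)]]
        outflow_from_minima[OF that(1) k] k that
      by (simp add: slope_def minus_divide_right[symmetric] minus_divide_left)
    ultimately show ?thesis
      unfolding \<sigma>_def using fin by auto
  qed
  have gain_le: "u (W i + d i) - u (W i) \<le> \<sigma> * d i" if "i \<in> G" for i
  proof -
    have gain: "u (W i + d i) - u (W i) = slope i * d i" if "d i \<noteq> 0"
      using that by (simp add: slope_def)
    consider "d i = 0" | "0 < d i" | "d i < 0" by linarith
    then show ?thesis
    proof cases
      case 2
      then show ?thesis using gain slope_le_\<sigma>[OF \<open>i \<in> G\<close>] by (simp add: mult_right_mono)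
    next
      case 3
      then show ?thesis using gain \<sigma>_le_slope[OF \<open>i \<in> G\<close>] by (simp add: mult_right_mono_neg)
    qed simp
  qed
  have "(\<Sum>i\<in>G. u (W i + d i)) - (\<Sum>i\<in>G. u (W i)) = (\<Sum>i\<in>G. u (W i + d i) - u (W i))"
    by (simp add: sum_subtractf)
  also have "\<dots> \<le> (\<Sum>i\<in>G. \<sigma> * d i)"
    using gain_le by (rule sum_mono)
  also have "\<dots> = \<sigma> * sum d G"
    by (simp add: sum_distrib_left)
  also have "\<dots> \<le> 0"
    using \<sigma>_nonneg \<open>sum d G \<le> 0\<close> by (simp add: mult_nonneg_nonpos)
  finally show ?thesis by simp
qed

lemma ncgg_finite_edges: "ncgg P A E \<alpha> U \<Longrightarrow> finite E"
  unfolding ncgg_def by (meson finite_SigmaI finite_subset)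

lemma finite_goods_of: "finite E \<Longrightarrow> finite (goods_of E j)"
  unfolding goods_of_def by (rule finite_subset[of _ "fst ` E"]) force+

lemma finite_agents_of: "finite E \<Longrightarrow> finite (agents_of E i)"
  unfolding agents_of_def by (rule finite_subset[of _ "snd ` E"]) force+

lemma total_resource_nonneg:
  "0 \<le> \<alpha> i \<Longrightarrow> (\<And>k. k \<in> agents_of E i \<Longrightarrow> 0 \<le> x i k) \<Longrightarrow> 0 \<le> total_resource E \<alpha> x i"
  unfolding total_resource_def by (simp add: sum_nonneg)

lemma total_resource_deviate:
  assumes "finite E" and "(i, j) \<in> E"
  shows "total_resource E \<alpha> (deviate x j s) i = total_resource E \<alpha> x i - x i j + s i"
proof -
  have j: "j \<in> agents_of E i" and fin: "finite (agents_of E i)"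
    using assms finite_agents_of by (auto simp: agents_of_def)
  have "(\<Sum>k\<in>agents_of E i - {j}. deviate x j s i k) = (\<Sum>k\<in>agents_of E i - {j}. x i k)"
    by (rule sum.cong) (auto simp: deviate_def)
  then show ?thesis
    unfolding total_resource_def using sum.remove[OF fin j, of "deviate x j s i"] sum.remove[OF fin j, of "x i"]
    by (simp add: deviate_def)
qed

definition full_profile :: "'a set \<Rightarrow> ('p \<times> 'a) set \<Rightarrow> ('p \<Rightarrow> 'a \<Rightarrow> real) \<Rightarrow> bool" where
  "full_profile A E x \<longleftrightarrow> is_profile A E x \<and>
     (\<forall>j\<in>A. goods_of E j \<noteq> {} \<longrightarrow> (\<Sum>i\<in>goods_of E j. x i j) = 1)"

definition levelled :: "('p \<times> 'a) set \<Rightarrow> ('p \<Rightarrow> real) \<Rightarrow> ('p \<Rightarrow> 'a \<Rightarrow> real) \<Rightarrow> bool" where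
  "levelled E \<alpha> x \<longleftrightarrow> (\<forall>j i i'. i \<in> goods_of E j \<longrightarrow> i' \<in> goods_of E j \<longrightarrow> 0 < x i j \<longrightarrow>
     total_resource E \<alpha> x i \<le> total_resource E \<alpha> x i')"

lemma full_levelled_imp_pure_nash:
  assumes game: "ncgg P A E \<alpha> U"
    and mono: "\<forall>j\<in>A. mono_on {0..} (U j)" and concave: "\<forall>j\<in>A. concave_on {0..} (U j)"
    and full: "full_profile A E x" and levelled: "levelled E \<alpha> x"
  shows "pure_nash A E \<alpha> U x"
  unfolding pure_nash_def
proof (intro conjI ballI allI impI)
  show profile: "is_profile A E x"
    using full by (simp add: full_profile_def)
  fix j s
  assume j: "j \<in> A" and s: "is_strategy E j s"
  define G where "G = goods_of E j"
  define W where "W = total_resource E \<alpha> x"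
  define d where "d i = s i - x i j" for i
  have finE: "finite E" and EPA: "E \<subseteq> P \<times> A" and \<alpha>: "\<forall>i\<in>P. 0 \<le> \<alpha> i"
    using game by (auto simp: ncgg_def ncgg_finite_edges)
  have ij: "(i, j) \<in> E" "i \<in> P" if "i \<in> G" for i
    using that EPA by (auto simp: G_def goods_of_def)
  have x_nonneg: "0 \<le> x i k" if "(i, k) \<in> E" for i k
    using profile that EPA by (force simp: is_profile_def is_strategy_def goods_of_def)
  have s_nonneg: "0 \<le> s i" if "i \<in> G" for i
    using s that by (simp add: is_strategy_def G_def)
  have deviate_W: "total_resource E \<alpha> (deviate x j s) i = W i + d i" if "i \<in> G" for i
    using total_resource_deviate[OF finE ij(1)[OF that]] by (simp add: W_def d_def)
  have W_nonneg: "W i \<in> {0..}" if "i \<in> G" for i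
    using total_resource_nonneg[of \<alpha> i E x] \<alpha> ij[OF that] x_nonneg
    by (simp add: W_def agents_of_def)
  have Wd_nonneg: "W i + d i \<in> {0..}" if "i \<in> G" for i
    using total_resource_nonneg[of \<alpha> i E "deviate x j s"] \<alpha> ij[OF that] x_nonneg s_nonneg[OF that]
    by (simp add: deviate_W[OF that, symmetric] deviate_def agents_of_def)
  have outflow: "W k \<le> W i" if "i \<in> G" "k \<in> G" "d k < 0" for i k
    using levelled that s_nonneg[OF that(2)] by (simp add: levelled_def W_def G_def d_def)
  have "sum d G \<le> 0"
  proof (cases "G = {}")
    case False
    then have "(\<Sum>i\<in>G. x i j) = 1"
      using full j by (simp add: full_profile_def G_def)
    then show ?thesis
      using s by (simp add: d_def sum_subtractf is_strategy_def G_def)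
  qed simp
  then have "(\<Sum>i\<in>G. U j (W i + d i)) \<le> (\<Sum>i\<in>G. U j (W i))"
    using sum_concave_shift_le[of "{0..}" "U j" G W d] mono concave j finite_goods_of[OF finE]
      W_nonneg Wd_nonneg outflow
    by (simp add: G_def)
  then show "\<not> payoff E \<alpha> U (deviate x j s) j > payoff E \<alpha> U x j"
    by (simp add: payoff_def deviate_W G_def W_def)
qed

text \<open>Profiles are indexed by edges here, so that the product topology on
  \<open>'p \<times> 'a \<Rightarrow> real\<close> makes this set compact; entries off the edges are pinned to 0.\<close>
definition full_profiles :: "'a set \<Rightarrow> ('p \<times> 'a) set \<Rightarrow> ('p \<times> 'a \<Rightarrow> real) set" where
  "full_profiles A E = (\<Pi>\<^sub>E e\<in>UNIV. if e \<in> E then {0..1} else {0}) \<inter>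
     {y. \<forall>j\<in>A. goods_of E j \<noteq> {} \<longrightarrow> (\<Sum>i\<in>goods_of E j. y (i, j)) = 1}"

lemma mem_full_profiles:
  "y \<in> full_profiles A E \<longleftrightarrow> (\<forall>e. y e \<in> (if e \<in> E then {0..1} else {0})) \<and>
     (\<forall>j\<in>A. goods_of E j \<noteq> {} \<longrightarrow> (\<Sum>i\<in>goods_of E j. y (i, j)) = 1)"
  by (simp add: full_profiles_def PiE_iff)

lemma full_profiles_box: "y \<in> full_profiles A E \<Longrightarrow> y e \<in> (if e \<in> E then {0..1} else {0})"
  unfolding full_profiles_def PiE_iff by blast

lemma full_profiles_row_sum:
  "y \<in> full_profiles A E \<Longrightarrow> j \<in> A \<Longrightarrow> goods_of E j \<noteq> {} \<Longrightarrow> (\<Sum>i\<in>goods_of E j. y (i, j)) = 1"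
  by (simp add: mem_full_profiles)

lemma full_profiles_imp_full_profile:
  assumes "y \<in> full_profiles A E"
  shows "full_profile A E (curry y)"
proof -
  have "0 \<le> y (i, j)" if "i \<in> goods_of E j" for i j
    using full_profiles_box[OF assms, of "(i, j)"] that by (simp add: goods_of_def)
  moreover have "(\<Sum>i\<in>goods_of E j. y (i, j)) \<le> 1" if "j \<in> A" for j
    using assms that by (cases "goods_of E j = {}") (simp_all add: full_profiles_row_sum)
  ultimately show ?thesis
    using assms by (simp add: full_profile_def is_profile_def is_strategy_def mem_full_profiles)
qed

lemma compact_full_profiles:
  fixes A :: "'a set" and E :: "('p \<times> 'a) set"
  shows "compact (full_profiles A E)"
  unfolding full_profiles_def
proof (rule compact_Int_closed)
  show "compact (\<Pi>\<^sub>E e\<in>UNIV. if e \<in> E then {0..1::real} else {0})"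
    using compactin_PiE[of "\<lambda>_. euclidean" UNIV "\<lambda>e. if e \<in> E then {0..1::real} else {0}"]
    by (simp add: euclidean_product_topology)
  show "closed {y :: 'p \<times> 'a \<Rightarrow> real. \<forall>j\<in>A. goods_of E j \<noteq> {} \<longrightarrow> (\<Sum>i\<in>goods_of E j. y (i, j)) = 1}"
    unfolding Ball_def
    by (intro closed_Collect_all closed_Collect_imp open_Collect_const closed_Collect_eq
        continuous_intros continuous_on_product_coordinates)
qed

lemma full_profiles_nonempty:
  assumes "finite E"
  shows "full_profiles A E \<noteq> {}"
proof -
  define c where "c j = (SOME i. i \<in> goods_of E j)" for j
  define y where "y e = (if e \<in> E \<and> fst e = c (snd e) then 1 else 0::real)" for e
  have "(\<Sum>i\<in>goods_of E j. y (i, j)) = 1" if "goods_of E j \<noteq> {}" for j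
  proof -
    have "c j \<in> goods_of E j"
      using that unfolding c_def by (simp add: some_in_eq)
    moreover have "(\<Sum>i\<in>goods_of E j. y (i, j)) = (\<Sum>i\<in>goods_of E j. if i = c j then 1 else 0)"
      by (rule sum.cong) (auto simp: y_def goods_of_def)
    ultimately show ?thesis
      using finite_goods_of[OF assms] by simp
  qed
  then have "y \<in> full_profiles A E"
    by (auto simp: mem_full_profiles y_def)
  then show ?thesis by blast
qed

definition potential :: "'p set \<Rightarrow> ('p \<times> 'a) set \<Rightarrow> ('p \<Rightarrow> real) \<Rightarrow> ('p \<times> 'a \<Rightarrow> real) \<Rightarrow> real" where
  "potential P E \<alpha> y = (\<Sum>p\<in>P. (total_resource E \<alpha> (curry y) p)\<^sup>2)"

lemma continuous_on_potential: "continuous_on S (potential P E \<alpha>)"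
  unfolding potential_def total_resource_def curry_def
  by (intro continuous_intros continuous_on_product_then_coordinatewise[OF continuous_on_id])

definition transfer :: "'a \<Rightarrow> 'p \<Rightarrow> 'p \<Rightarrow> real \<Rightarrow> ('p \<times> 'a \<Rightarrow> real) \<Rightarrow> ('p \<times> 'a \<Rightarrow> real)" where
  "transfer j i i' \<epsilon> y = (\<lambda>e. y e + (if e = (i', j) then \<epsilon> else 0) - (if e = (i, j) then \<epsilon> else 0))"

lemma total_resource_transfer:
  assumes "finite E" "(i, j) \<in> E" "(i', j) \<in> E"
  shows "total_resource E \<alpha> (curry (transfer j i i' \<epsilon> y)) p =
    total_resource E \<alpha> (curry y) p + (if p = i' then \<epsilon> else 0) - (if p = i then \<epsilon> else 0)"
  using assms finite_agents_of[OF assms(1)]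
  by (simp add: total_resource_def transfer_def sum.distrib sum_subtractf sum.delta agents_of_def)

lemma transfer_mem_full_profiles:
  assumes "finite E" and y: "y \<in> full_profiles A E" and "j \<in> A"
    and i: "i \<in> goods_of E j" "i' \<in> goods_of E j" "i \<noteq> i'"
    and \<epsilon>: "0 \<le> \<epsilon>" "\<epsilon> \<le> y (i, j)"
  shows "transfer j i i' \<epsilon> y \<in> full_profiles A E"
proof -
  have fin: "finite (goods_of E k)" for k
    using finite_goods_of[OF \<open>finite E\<close>] .
  note y_box = full_profiles_box[OF y]
  have y_nonneg: "0 \<le> y e" for e
    using y_box[of e] by (cases "e \<in> E") auto
  have "(\<Sum>l\<in>{i, i'}. y (l, j)) \<le> (\<Sum>l\<in>goods_of E j. y (l, j))"
    using i y_nonneg by (intro sum_mono2[OF fin]) auto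
  also have "\<dots> = 1"
    using full_profiles_row_sum[OF y \<open>j \<in> A\<close>] i by blast
  finally have "y (i, j) + y (i', j) \<le> 1"
    using i by simp
  then have "transfer j i i' \<epsilon> y e \<in> (if e \<in> E then {0..1} else {0})" for e
    using y_box[of e] y_box[of "(i, j)"] i \<epsilon>
    by (auto simp: transfer_def goods_of_def)
  moreover have "(\<Sum>l\<in>goods_of E k. transfer j i i' \<epsilon> y (l, k)) = (\<Sum>l\<in>goods_of E k. y (l, k))" for k
    using i fin[of k] by (cases "k = j") (simp_all add: transfer_def sum.distrib sum_subtractf goods_of_def)
  ultimately show ?thesis
    using y by (simp add: mem_full_profiles)
qed

lemma sum_squares_transfer_less:
  fixes W :: "'p \<Rightarrow> real"
  assumes "finite P" "i \<in> P" "i' \<in> P" "0 < \<epsilon>" "2 * \<epsilon> \<le> W i - W i'"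
  shows "(\<Sum>p\<in>P. (W p + (if p = i' then \<epsilon> else 0) - (if p = i then \<epsilon> else 0))\<^sup>2) < (\<Sum>p\<in>P. (W p)\<^sup>2)"
proof -
  have "i \<noteq> i'"
    using assms by auto
  then have "(W p + (if p = i' then \<epsilon> else 0) - (if p = i then \<epsilon> else 0))\<^sup>2 - (W p)\<^sup>2 =
      (if p = i' then 2 * W i' * \<epsilon> + \<epsilon>\<^sup>2 else 0) + (if p = i then \<epsilon>\<^sup>2 - 2 * W i * \<epsilon> else 0)" for p
    by (auto simp: power2_eq_square algebra_simps)
  then have "(\<Sum>p\<in>P. (W p + (if p = i' then \<epsilon> else 0) - (if p = i then \<epsilon> else 0))\<^sup>2) - (\<Sum>p\<in>P. (W p)\<^sup>2) =
      \<epsilon> * (2 * \<epsilon> - 2 * (W i - W i'))"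
    using assms by (simp add: sum_subtractf[symmetric] sum.distrib power2_eq_square algebra_simps)
  also have "\<dots> < 0"
    using assms by (intro mult_pos_neg) auto
  finally show ?thesis by simp
qed

lemma potential_minimizer_levelled:
  assumes "finite P" "E \<subseteq> P \<times> A" "finite E"
    and y: "y \<in> full_profiles A E"
    and min: "\<forall>z\<in>full_profiles A E. potential P E \<alpha> y \<le> potential P E \<alpha> z"
  shows "levelled E \<alpha> (curry y)"
  unfolding levelled_def
proof (intro allI impI)
  fix j i i'
  assume i: "i \<in> goods_of E j" and i': "i' \<in> goods_of E j" and pos: "0 < curry y i j"
  define W where "W = total_resource E \<alpha> (curry y)"
  show "total_resource E \<alpha> (curry y) i \<le> total_resource E \<alpha> (curry y) i'"
  proof (rule ccontr)
    assume "\<not> ?thesis"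
    then have gap: "W i' < W i"
      by (simp add: W_def)
    have edges: "(i, j) \<in> E" "(i', j) \<in> E"
      using i i' by (simp_all add: goods_of_def)
    then have "i \<in> P" "i' \<in> P" "j \<in> A"
      using assms(2) by auto
    define \<epsilon> where "\<epsilon> = min (y (i, j)) ((W i - W i') / 2)"
    have \<epsilon>: "0 < \<epsilon>" "\<epsilon> \<le> y (i, j)" "2 * \<epsilon> \<le> W i - W i'"
      using pos gap by (auto simp: \<epsilon>_def min_def)
    have "transfer j i i' \<epsilon> y \<in> full_profiles A E"
      using transfer_mem_full_profiles[OF \<open>finite E\<close> y \<open>j \<in> A\<close> i i'] gap \<epsilon> by force
    moreover have "potential P E \<alpha> (transfer j i i' \<epsilon> y) < potential P E \<alpha> y"
      using sum_squares_transfer_less[OF \<open>finite P\<close> \<open>i \<in> P\<close> \<open>i' \<in> P\<close> \<epsilon>(1,3)]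
      by (simp add: potential_def total_resource_transfer[OF \<open>finite E\<close> edges] W_def)
    ultimately show False
      using min by force
  qed
qed

theorem theorem4:
  fixes P :: "'p set" and A :: "'a set" and E :: "('p \<times> 'a) set"
    and \<alpha> :: "'p \<Rightarrow> real" and U :: "'a \<Rightarrow> real \<Rightarrow> real"
  assumes "ncgg P A E \<alpha> U"
    and "\<forall>j\<in>A. strict_mono_on {0..} (U j)"
    and "\<forall>j\<in>A. concave_on {0..} (U j)"
    and "\<forall>j\<in>A. \<forall>t\<ge>0. U j differentiable (at t within {0..})"
  shows "\<exists>x. pure_nash A E \<alpha> U x"
proof -
  have "finite E" "finite P" "E \<subseteq> P \<times> A"
    using assms(1) by (simp_all add: ncgg_finite_edges ncgg_def)
  obtain y where y: "y \<in> full_profiles A E"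
    and min: "\<forall>z\<in>full_profiles A E. potential P E \<alpha> y \<le> potential P E \<alpha> z"
    using continuous_attains_inf[OF compact_full_profiles full_profiles_nonempty[OF \<open>finite E\<close>]
        continuous_on_potential]
    by blast
  have "full_profile A E (curry y)"
    using y by (rule full_profiles_imp_full_profile)
  moreover have "levelled E \<alpha> (curry y)"
    using potential_minimizer_levelled[OF \<open>finite P\<close> \<open>E \<subseteq> P \<times> A\<close> \<open>finite E\<close> y min] .
  moreover have "\<forall>j\<in>A. mono_on {0..} (U j)"
    using assms(2) by (simp add: strict_mono_on_imp_mono_on)
  ultimately show ?thesis
    using full_levelled_imp_pure_nash[OF assms(1) _ assms(3)] by blast
qed

end
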